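(* Let $A$ be an $m\times m$ coloring matrix all of whose row sums equal $r$. Then for every color $1\le i\le m$ and every $n\ge1$, $t_A^{(i)}(n)=r^{n-1}C_{n-1}$, and hence $t_A(n)=m\,r^{n-1}C_{n-1}$. In particular, all colors of $A$ are pairwise interchangeable, and any two $m\times m$ coloring matrices whose row sums all equal $r$ are strictly tree coloring equivalent.
   Context: A plane tree is an unlabeled rooted tree in which the children of every vertex are linearly ordered. A coloring matrix is an $m\times m$ matrix $A=(a_{ij})$ with entries in $\{0,1\}$. An $A$-coloring of a plane tree assigns to each vertex a color in $\{1,\dots,m\}$ such that whenever a vertex of color $j$ is a child of a vertex of color $i$, $a_{ij}=1$. Let $t_A(n)$ be the number of pairs (plane tree with $n$ vertices, $A$-coloring of it) and $t_A^{(i)}(n)$ the number of those with root color $i$. $C_k=\frac{1}{k+1}\binom{2k}{k}$ is the $k$-th Catalan number. Colors $i,j$ are interchangeable for $A$ if $t_A^{(i)}(n)=t_A^{(j)}(n)$ for all $n\ge1$. Two coloring matrices $A,B$ of the same size are strictly tree coloring equivalent if $t_A^{(i)}(n)=t_B^{(i)}(n)$ for all $n\ge1$ and all $i$. *)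

theory Defs
  imports Main
begin

datatype ptree = PNode "ptree list"

fun psize :: "ptree \<Rightarrow> nat" where
  "psize (PNode ts) = 1 + sum_list (map psize ts)"

text \<open>A coloring of a plane tree is recorded as a tree of the same shape whose
  vertices carry colors (natural numbers).\<close>
datatype ctree = CNode nat "ctree list"

fun shape :: "ctree \<Rightarrow> ptree" where
  "shape (CNode c ts) = PNode (map shape ts)"

fun root_color :: "ctree \<Rightarrow> nat" where
  "root_color (CNode c ts) = c"

definition coloring_matrix :: "nat \<Rightarrow> (nat \<Rightarrow> nat \<Rightarrow> nat) \<Rightarrow> bool" where
  "coloring_matrix m A \<longleftrightarrow> (\<forall>i\<in>{1..m}. \<forall>j\<in>{1..m}. A i j \<in> {0, 1})"

fun valid_col :: "nat \<Rightarrow> (nat \<Rightarrow> nat \<Rightarrow> nat) \<Rightarrow> ctree \<Rightarrow> bool" where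
  "valid_col m A (CNode c ts) \<longleftrightarrow>
     c \<in> {1..m} \<and> list_all (\<lambda>t. A c (root_color t) = 1 \<and> valid_col m A t) ts"

definition is_A_coloring :: "nat \<Rightarrow> (nat \<Rightarrow> nat \<Rightarrow> nat) \<Rightarrow> ptree \<Rightarrow> ctree \<Rightarrow> bool" where
  "is_A_coloring m A T c \<longleftrightarrow> shape c = T \<and> valid_col m A c"

definition tA :: "nat \<Rightarrow> (nat \<Rightarrow> nat \<Rightarrow> nat) \<Rightarrow> nat \<Rightarrow> nat" where
  "tA m A n = card {(T, c). psize T = n \<and> is_A_coloring m A T c}"

definition tAi :: "nat \<Rightarrow> (nat \<Rightarrow> nat \<Rightarrow> nat) \<Rightarrow> nat \<Rightarrow> nat \<Rightarrow> nat" where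
  "tAi m A i n = card {(T, c). psize T = n \<and> is_A_coloring m A T c \<and> root_color c = i}"

definition catalan :: "nat \<Rightarrow> nat" where
  "catalan k = ((2 * k) choose k) div (k + 1)"

definition interchangeable :: "nat \<Rightarrow> (nat \<Rightarrow> nat \<Rightarrow> nat) \<Rightarrow> nat \<Rightarrow> nat \<Rightarrow> bool" where
  "interchangeable m A i j \<longleftrightarrow> (\<forall>n\<ge>1. tAi m A i n = tAi m A j n)"

definition strictly_equiv :: "nat \<Rightarrow> (nat \<Rightarrow> nat \<Rightarrow> nat) \<Rightarrow> (nat \<Rightarrow> nat \<Rightarrow> nat) \<Rightarrow> bool" where
  "strictly_equiv m A B \<longleftrightarrow> (\<forall>n\<ge>1. \<forall>i\<in>{1..m}. tAi m A i n = tAi m B i n)"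

end

theory Submission
  imports Defs "HOL-Computational_Algebra.Formal_Power_Series"
begin

text \<open>Deleting the root of a colored tree with root color \<open>i\<close> leaves an ordered forest whose
  roots have colors \<open>j\<close> with \<open>a\<^sub>i\<^sub>j = 1\<close>. Splitting off its first tree shows that the number
  \<open>F\<^sub>i(n)\<close> of such forests with \<open>n\<close> vertices satisfies
  \<open>F\<^sub>i(n+1) = \<Sum>\<^sub>k \<Sum>\<^bsub>j: a\<^sub>i\<^sub>j = 1\<^esub> F\<^sub>j(k) F\<^sub>i(n-k)\<close>, \<open>F\<^sub>i(0) = 1\<close>.
  If every row sum is \<open>r\<close>, the inner sum has \<open>r\<close> terms and \<open>r\<^sup>n C\<^sub>n\<close> solves the recursion
  by the Catalan convolution \<open>C\<^sub>n\<^sub>+\<^sub>1 = \<Sum>\<^sub>k C\<^sub>k C\<^sub>n\<^sub>-\<^sub>k\<close>, independently of \<open>i\<close>.\<close>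

lemma of_nat_Suc_times_gbinomial_Suc:
  "of_nat (Suc k) * (a gchoose Suc k) = (a - of_nat k) * (a gchoose k)"
  by (simp only: gbinomial_absorption gbinomial_absorb_comp)

lemma central_binomial_eq_Suc_times_diff:
  "(2 * k choose k) = Suc k * ((2 * k choose k) - (2 * k choose Suc k))"
proof (cases k)
  case 0
  then show ?thesis by simp
next
  case (Suc j)
  have "Suc k * (2 * k choose Suc k) = 2 * k * ((2 * k - 1) choose k)"
    using times_binomial_minus1_eq[of "Suc k" "2 * k"] by simp
  also have "((2 * k - 1) choose k) = ((2 * k - 1) choose (k - 1))"
    using binomial_symmetric[of k "2 * k - 1"] Suc by (simp add: numeral_2_eq_2)
  also have "2 * k * \<dots> = k * (2 * k choose k)"
    using times_binomial_minus1_eq[of k "2 * k"] Suc by simp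
  finally show ?thesis by (simp add: diff_mult_distrib2)
qed

lemma catalan_mult_Suc: "catalan k * Suc k = (2 * k choose k)"
proof -
  define d where "d = (2 * k choose k) - (2 * k choose Suc k)"
  have "(2 * k choose k) = d * Suc k"
    unfolding d_def by (subst mult.commute) (rule central_binomial_eq_Suc_times_diff)
  then have "catalan k = d"
    by (simp only: catalan_def Suc_eq_plus1[symmetric] nonzero_mult_div_cancel_right[OF nat.distinct(2)])
  with \<open>(2 * k choose k) = d * Suc k\<close> show ?thesis by simp
qed

lemma central_binomial_Suc:
  "Suc k * (2 * Suc k choose Suc k) = 2 * (2 * k + 1) * (2 * k choose k)"
proof -
  have "Suc k * (2 * Suc k choose Suc k) = 2 * Suc k * (Suc (2 * k) choose k)"
    using Suc_times_binomial[of k "Suc (2 * k)"] by simp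
  also have "(Suc (2 * k) choose k) = (Suc (2 * k) choose Suc k)"
    using binomial_symmetric[of k "Suc (2 * k)"] by simp
  also have "2 * Suc k * \<dots> = 2 * (2 * k + 1) * (2 * k choose k)"
    using Suc_times_binomial[of k "2 * k"] by simp
  finally show ?thesis .
qed

lemma catalan_Suc_ratio: "catalan (Suc k) * Suc (Suc k) = 2 * (2 * k + 1) * catalan k"
proof -
  have "Suc k * (catalan (Suc k) * Suc (Suc k)) = Suc k * (2 * Suc k choose Suc k)"
    by (simp only: catalan_mult_Suc)
  also have "\<dots> = 2 * (2 * k + 1) * (2 * k choose k)"
    by (rule central_binomial_Suc)
  also have "\<dots> = Suc k * (2 * (2 * k + 1) * catalan k)"
    by (simp only: catalan_mult_Suc[symmetric]) (simp add: algebra_simps)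
  finally show ?thesis by (rule mult_left_cancel[THEN iffD1, rotated]) simp
qed

text \<open>The coefficient of \<open>x\<^sup>k\<close> in \<open>\<surd>(1 - 4x)\<close>; the Catalan convolution is
  the vanishing of the higher coefficients of \<open>\<surd>(1 - 4x)\<^sup>2 = 1 - 4x\<close>.\<close>
definition sqrt_coeff :: "nat \<Rightarrow> real" where
  "sqrt_coeff k = ((1/2) gchoose k) * (-4) ^ k"

lemma sqrt_coeff_0 [simp]: "sqrt_coeff 0 = 1"
  by (simp add: sqrt_coeff_def)

lemma sqrt_coeff_Suc: "sqrt_coeff (Suc k) = - 2 * real (catalan k)"
proof (induction k)
  case 0
  then show ?case by (simp add: sqrt_coeff_def catalan_def)
next
  case (Suc k)
  have "of_nat (Suc (Suc k)) * sqrt_coeff (Suc (Suc k))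
      = (1/2 - of_nat (Suc k)) * (-4) * sqrt_coeff (Suc k)"
    unfolding sqrt_coeff_def power_Suc[of _ "Suc k"] mult.assoc[symmetric] of_nat_Suc_times_gbinomial_Suc
    by (simp add: algebra_simps)
  also have "\<dots> = - 2 * of_nat (2 * (2 * k + 1) * catalan k)"
    by (simp add: Suc.IH algebra_simps)
  also have "\<dots> = of_nat (Suc (Suc k)) * (- 2 * real (catalan (Suc k)))"
    by (simp only: catalan_Suc_ratio[symmetric]) (simp add: algebra_simps)
  finally show ?case by (rule mult_left_cancel[THEN iffD1, rotated]) simp
qed

lemma sqrt_coeff_convolution:
  "(\<Sum>k\<le>n. sqrt_coeff k * sqrt_coeff (n - k)) = (-4) ^ n * (1 gchoose n)"
proof -
  have "(\<Sum>k\<le>n. sqrt_coeff k * sqrt_coeff (n - k))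
      = (-4) ^ n * (\<Sum>k\<le>n. ((1/2) gchoose k) * ((1/2) gchoose (n - k)))"
    unfolding sqrt_coeff_def sum_distrib_left
    by (intro sum.cong refl) (simp add: algebra_simps flip: power_add)
  also have "\<dots> = (-4) ^ n * (1 gchoose n)"
    using gbinomial_Vandermonde[of "1/2 :: real" "1/2" n] by (simp add: atLeast0AtMost)
  finally show ?thesis .
qed

lemma catalan_0 [simp]: "catalan 0 = 1"
  by (simp add: catalan_def)

lemma catalan_Suc: "catalan (Suc n) = (\<Sum>k\<le>n. catalan k * catalan (n - k))"
proof -
  have "(1 :: real) gchoose Suc (Suc n) = 0"
    using binomial_gbinomial[of 1 "Suc (Suc n)", where 'a = real] by simp
  then have "0 = (\<Sum>k\<le>Suc (Suc n). sqrt_coeff k * sqrt_coeff (Suc (Suc n) - k))"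
    by (simp add: sqrt_coeff_convolution)
  also have "\<dots> = 2 * sqrt_coeff (Suc (Suc n)) + (\<Sum>k\<le>n. sqrt_coeff (Suc k) * sqrt_coeff (Suc (n - k)))"
    by (simp only: sum.atMost_Suc_shift[of _ "Suc n"] sum.atMost_Suc[of _ n])
      (simp add: Suc_diff_le)
  also have "\<dots> = 4 * (real (\<Sum>k\<le>n. catalan k * catalan (n - k)) - catalan (Suc n))"
    by (simp add: sqrt_coeff_Suc sum_distrib_left algebra_simps)
  finally have "real (catalan (Suc n)) = real (\<Sum>k\<le>n. catalan k * catalan (n - k))"
    by argo
  then show ?thesis by (simp only: of_nat_eq_iff)
qed

definition csize :: "ctree \<Rightarrow> nat" where
  "csize t = psize (shape t)"

lemma csize_CNode [simp]: "csize (CNode c ts) = Suc (sum_list (map csize ts))"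
  by (simp add: csize_def[abs_def] comp_def)

lemma csize_pos: "csize t > 0"
  by (cases t) simp

lemma root_color_valid: "valid_col m A t \<Longrightarrow> root_color t \<in> {1..m}"
  by (cases t) simp

definition colored_trees :: "nat \<Rightarrow> (nat \<Rightarrow> nat \<Rightarrow> nat) \<Rightarrow> nat \<Rightarrow> nat \<Rightarrow> ctree set" where
  "colored_trees m A j n = {t. valid_col m A t \<and> root_color t = j \<and> csize t = n}"

text \<open>Colored forests that may hang below a vertex of color \<open>i\<close>.\<close>
definition colored_forests :: "nat \<Rightarrow> (nat \<Rightarrow> nat \<Rightarrow> nat) \<Rightarrow> nat \<Rightarrow> nat \<Rightarrow> ctree list set" where
  "colored_forests m A i n =
     {ts. list_all (\<lambda>t. A i (root_color t) = 1 \<and> valid_col m A t) ts \<and> sum_list (map csize ts) = n}"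

definition child_colors :: "nat \<Rightarrow> (nat \<Rightarrow> nat \<Rightarrow> nat) \<Rightarrow> nat \<Rightarrow> nat set" where
  "child_colors m A i = {j \<in> {1..m}. A i j = 1}"

lemma colored_trees_0: "colored_trees m A j 0 = {}"
  using csize_pos by (auto simp: colored_trees_def)

lemma colored_trees_Suc:
  assumes "j \<in> {1..m}"
  shows "colored_trees m A j (Suc n) = CNode j ` colored_forests m A j n"
proof (intro equalityI subsetI)
  fix t assume "t \<in> colored_trees m A j (Suc n)"
  then show "t \<in> CNode j ` colored_forests m A j n"
    by (cases t) (auto simp: colored_trees_def colored_forests_def)
qed (use assms in \<open>auto simp: colored_trees_def colored_forests_def\<close>)

lemma colored_forests_0: "colored_forests m A i 0 = {[]}"
proof -
  have "ts = []" if "sum_list (map csize ts) = 0" for ts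
    using that csize_pos[of "hd ts"] by (cases ts) auto
  then show ?thesis
    by (auto simp: colored_forests_def)
qed

lemma colored_forests_Suc:
  "colored_forests m A i (Suc n) = (\<lambda>(t, ts). t # ts) `
     (\<Union>k\<le>n. \<Union>j\<in>child_colors m A i. colored_trees m A j (Suc k) \<times> colored_forests m A i (n - k))"
  (is "?F = ?G")
proof (intro equalityI subsetI)
  fix ts assume "ts \<in> ?F"
  then obtain c us ts' where ts: "ts = CNode c us # ts'"
    by (cases ts) (auto simp: colored_forests_def elim: ctree.exhaust)
  let ?k = "sum_list (map csize us)"
  have "(CNode c us, ts') \<in> colored_trees m A c (Suc ?k) \<times> colored_forests m A i (n - ?k)"
    and "?k \<le> n" "c \<in> child_colors m A i"
    using \<open>ts \<in> ?F\<close> unfolding ts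
    by (auto simp: colored_trees_def colored_forests_def child_colors_def)
  then show "ts \<in> ?G"
    unfolding ts by blast
qed (auto simp: colored_trees_def colored_forests_def child_colors_def)

lemma finite_colored_forests: "finite (colored_forests m A i n)"
proof (induction n arbitrary: i rule: less_induct)
  case (less n)
  show ?case
  proof (cases n)
    case 0
    then show ?thesis by (simp add: colored_forests_0)
  next
    case (Suc n')
    have "finite (colored_trees m A j (Suc k))" if "j \<in> child_colors m A i" "k \<le> n'" for j k
      using that less Suc by (simp add: colored_trees_Suc child_colors_def)
    moreover have "finite (colored_forests m A i (n' - k))" for k
      using less Suc by simp
    ultimately show ?thesis
      unfolding Suc colored_forests_Suc by (auto simp: child_colors_def)
  qed
qed

lemma finite_colored_trees: "finite (colored_trees m A j n)"
proof (cases "j \<in> {1..m}")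
  case True
  then show ?thesis
    by (cases n) (simp_all add: colored_trees_0 colored_trees_Suc finite_colored_forests)
next
  case False
  then have "colored_trees m A j n = {}"
    by (auto simp: colored_trees_def dest: root_color_valid)
  then show ?thesis by simp
qed

lemma finite_child_colors: "finite (child_colors m A i)"
  by (simp add: child_colors_def)

lemma card_colored_forests_Suc:
  "card (colored_forests m A i (Suc n)) =
     (\<Sum>k\<le>n. \<Sum>j\<in>child_colors m A i.
        card (colored_forests m A j k) * card (colored_forests m A i (n - k)))"
proof -
  let ?P = "\<lambda>k j. colored_trees m A j (Suc k) \<times> colored_forests m A i (n - k)"
  have finite_P: "finite (?P k j)" for k j
    by (simp add: finite_colored_trees finite_colored_forests)
  have card_P: "card (?P k j) = card (colored_forests m A j k) * card (colored_forests m A i (n - k))"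
    if "j \<in> child_colors m A i" for k j
    using that by (simp add: colored_trees_Suc child_colors_def card_image inj_on_def card_cartesian_product)
  have "card (colored_forests m A i (Suc n)) = card (\<Union>k\<le>n. \<Union>j\<in>child_colors m A i. ?P k j)"
    unfolding colored_forests_Suc by (rule card_image) (auto simp: inj_on_def)
  also have "\<dots> = (\<Sum>k\<le>n. card (\<Union>j\<in>child_colors m A i. ?P k j))"
    by (rule card_UN_disjoint) (simp_all add: finite_P finite_child_colors, auto simp: colored_trees_def)
  also have "\<dots> = (\<Sum>k\<le>n. \<Sum>j\<in>child_colors m A i. card (?P k j))"
    by (intro sum.cong refl card_UN_disjoint) (simp_all add: finite_P finite_child_colors, auto simp: colored_trees_def)
  finally show ?thesis
    by (simp add: card_P)
qed

lemma card_child_colors: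
  assumes "coloring_matrix m A" "i \<in> {1..m}"
  shows "card (child_colors m A i) = (\<Sum>j=1..m. A i j)"
proof -
  have "A i j = 0" if "j \<in> {1..m} - child_colors m A i" for j
  proof -
    have "A i j \<in> {0, 1}"
      using assms that unfolding coloring_matrix_def by blast
    with that show ?thesis
      by (auto simp: child_colors_def)
  qed
  then have "(\<Sum>j=1..m. A i j) = (\<Sum>j\<in>child_colors m A i. A i j)"
    by (intro sum.mono_neutral_right) (auto simp: child_colors_def)
  also have "\<dots> = card (child_colors m A i)"
    by (simp add: child_colors_def)
  finally show ?thesis ..
qed

lemma card_colored_forests:
  assumes "coloring_matrix m A" and "\<forall>i\<in>{1..m}. (\<Sum>j=1..m. A i j) = r"
    and "i \<in> {1..m}"
  shows "card (colored_forests m A i n) = r ^ n * catalan n"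
  using assms(3)
proof (induction n arbitrary: i rule: less_induct)
  case (less n)
  show ?case
  proof (cases n)
    case 0
    then show ?thesis by (simp add: colored_forests_0)
  next
    case (Suc n')
    have "card (colored_forests m A i n) =
        (\<Sum>k\<le>n'. \<Sum>j\<in>child_colors m A i. r ^ k * catalan k * (r ^ (n' - k) * catalan (n' - k)))"
      unfolding Suc card_colored_forests_Suc using less Suc
      by (intro sum.cong refl) (auto simp: child_colors_def)
    also have "\<dots> = (\<Sum>k\<le>n'. r * r ^ n' * (catalan k * catalan (n' - k)))"
      using card_child_colors[OF assms(1) less.prems] assms(2) less.prems
      by (intro sum.cong refl) (simp add: algebra_simps flip: power_add)
    also have "\<dots> = r ^ n * catalan n"
      by (simp add: Suc catalan_Suc sum_distrib_left)
    finally show ?thesis .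
  qed
qed

lemma tAi_eq_card_colored_trees: "tAi m A i n = card (colored_trees m A i n)"
proof -
  have "{(T, c). psize T = n \<and> is_A_coloring m A T c \<and> root_color c = i}
      = (\<lambda>c. (shape c, c)) ` colored_trees m A i n"
    by (auto simp: is_A_coloring_def colored_trees_def csize_def)
  then show ?thesis
    unfolding tAi_def by (simp add: card_image inj_on_def)
qed

lemma tA_eq_sum_tAi: "tA m A n = (\<Sum>i=1..m. tAi m A i n)"
proof -
  have "{(T, c). psize T = n \<and> is_A_coloring m A T c}
      = (\<lambda>c. (shape c, c)) ` {c. valid_col m A c \<and> csize c = n}"
    by (auto simp: is_A_coloring_def csize_def)
  also have "{c. valid_col m A c \<and> csize c = n} = (\<Union>i\<in>{1..m}. colored_trees m A i n)"
    unfolding colored_trees_def by (blast dest: root_color_valid)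
  finally have "tA m A n = card (\<Union>i\<in>{1..m}. colored_trees m A i n)"
    unfolding tA_def by (simp add: card_image inj_on_def)
  also have "\<dots> = (\<Sum>i=1..m. card (colored_trees m A i n))"
    by (rule card_UN_disjoint) (simp_all add: finite_colored_trees, auto simp: colored_trees_def)
  finally show ?thesis
    by (simp add: tAi_eq_card_colored_trees)
qed

lemma tAi_constant_row_sums:
  assumes "coloring_matrix m A" and "\<forall>i\<in>{1..m}. (\<Sum>j=1..m. A i j) = r"
    and "i \<in> {1..m}" and "n \<ge> 1"
  shows "tAi m A i n = r ^ (n - 1) * catalan (n - 1)"
proof -
  obtain n' where "n = Suc n'"
    using \<open>n \<ge> 1\<close> by (cases n) auto
  then show ?thesis
    using card_colored_forests[OF assms(1-3)] \<open>i \<in> {1..m}\<close>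
    by (simp add: tAi_eq_card_colored_trees colored_trees_Suc card_image inj_on_def)
qed

theorem theorem20:
  fixes m r :: nat and A :: "nat \<Rightarrow> nat \<Rightarrow> nat"
  assumes "coloring_matrix m A"
    and "\<forall>i\<in>{1..m}. (\<Sum>j=1..m. A i j) = r"
  shows "(\<forall>i\<in>{1..m}. \<forall>n\<ge>1. tAi m A i n = r ^ (n - 1) * catalan (n - 1))
    \<and> (\<forall>n\<ge>1. tA m A n = m * r ^ (n - 1) * catalan (n - 1))
    \<and> (\<forall>i\<in>{1..m}. \<forall>j\<in>{1..m}. interchangeable m A i j)
    \<and> (\<forall>B. coloring_matrix m B \<and> (\<forall>i\<in>{1..m}. (\<Sum>j=1..m. B i j) = r)
           \<longrightarrow> strictly_equiv m A B)"
proof -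
  have "strictly_equiv m A B"
    if "coloring_matrix m B" and "\<forall>i\<in>{1..m}. (\<Sum>j=1..m. B i j) = r" for B
    using tAi_constant_row_sums[OF assms] tAi_constant_row_sums[OF that]
    by (simp add: strictly_equiv_def)
  then show ?thesis
    using tAi_constant_row_sums[OF assms]
    by (simp add: tA_eq_sum_tAi interchangeable_def)
qed

end
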